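(* Let $(A,u_A)$ be an irreducible abstract state space. The following are equivalent: (a) $A$ is weakly self-dual and homogeneous; (b) every normalized state $\alpha$ in the interior of $A_+$ is the marginal of an isomorphism state in $A\otimes_{\max}A$, i.e., there is a state $\omega\in A\otimes_{\max}A$ such that $\hat\omega:A^*\to A$ is an order-isomorphism and $\hat\omega(u_A)=\alpha$.
   Context: An abstract state space is a pair $(A,u_A)$ where $A$ is a finite-dimensional real vector space with a closed, pointed, generating convex cone $A_+$, and $u_A$ is an interior point of the dual cone $A^*_+$; a normalized state is $\alpha\in A_+$ with $u_A(\alpha)=1$. $A$ is irreducible if there is no decomposition $A=A_1\oplus A_2$ into nonzero subspaces with $A_+=(A_+\cap A_1)+(A_+\cap A_2)$. An order-isomorphism is a linear bijection $\phi$ with $\phi(x)\ge0$ iff $x\ge0$. $A$ is weakly self-dual if there exists an order-isomorphism $A^*\to A$. $A$ is homogeneous if its group of order-automorphisms acts transitively on the interior of $A_+$. $A\otimes_{\max}A$ is the space of bilinear forms on $A^*\times A^*$ nonnegative on $A^*_+\times A^*_+$; a state is such a form with $\omega(u_A,u_A)=1$; $\hat\omega:A^*\to A$ is $\hat\omega(a)(b)=\omega(a,b)$, and $\hat\omega(u_A)$ is the marginal on the second factor. An isomorphism state is a state $\omega$ with $\hat\omega$ an order-isomorphism. *)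

theory Defs
  imports "HOL-Analysis.Analysis"
begin

text \<open>A finite-dimensional real ordered vector space is modelled as a Euclidean space
  type 'a with a cone K. The dual space A* is identified with 'a via the inner product:
  y represents the functional x \<mapsto> y \<bullet> x.\<close>

definition dual_cone :: "'a::euclidean_space set \<Rightarrow> 'a set" where
  "dual_cone K = {y. \<forall>x\<in>K. 0 \<le> y \<bullet> x}"

definition abstract_state_space :: "'a::euclidean_space set \<Rightarrow> 'a \<Rightarrow> bool" where
  "abstract_state_space K u \<longleftrightarrow>
     closed K \<and> convex K \<and> cone K \<and>
     K \<inter> uminus ` K = {0} \<and>
     {x - y | x y. x \<in> K \<and> y \<in> K} = UNIV \<and>
     u \<in> interior (dual_cone K)"

definition normalized_state :: "'a::euclidean_space set \<Rightarrow> 'a \<Rightarrow> 'a \<Rightarrow> bool" where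
  "normalized_state K u \<alpha> \<longleftrightarrow> \<alpha> \<in> K \<and> u \<bullet> \<alpha> = 1"

definition irreducible_cone :: "'a::euclidean_space set \<Rightarrow> bool" where
  "irreducible_cone K \<longleftrightarrow>
     \<not> (\<exists>A1 A2. subspace A1 \<and> subspace A2 \<and> A1 \<noteq> {0} \<and> A2 \<noteq> {0} \<and>
           A1 \<inter> A2 = {0} \<and> {x + y | x y. x \<in> A1 \<and> y \<in> A2} = UNIV \<and>
           K = {x + y | x y. x \<in> K \<inter> A1 \<and> y \<in> K \<inter> A2})"

definition order_iso :: "'a::euclidean_space set \<Rightarrow> 'a set \<Rightarrow> ('a \<Rightarrow> 'a) \<Rightarrow> bool" where
  "order_iso K1 K2 T \<longleftrightarrow> linear T \<and> bij T \<and> (\<forall>x. T x \<in> K2 \<longleftrightarrow> x \<in> K1)"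

definition weakly_self_dual :: "'a::euclidean_space set \<Rightarrow> bool" where
  "weakly_self_dual K \<longleftrightarrow> (\<exists>T. order_iso (dual_cone K) K T)"

definition homogeneous_cone :: "'a::euclidean_space set \<Rightarrow> bool" where
  "homogeneous_cone K \<longleftrightarrow>
     (\<forall>x\<in>interior K. \<forall>y\<in>interior K. \<exists>T. order_iso K K T \<and> T x = y)"

text \<open>Elements of A \<otimes>_max A: bilinear forms on A* \<times> A*, nonnegative on A*_+ \<times> A*_+.\<close>
definition max_tensor_state :: "'a::euclidean_space set \<Rightarrow> 'a \<Rightarrow> ('a \<Rightarrow> 'a \<Rightarrow> real) \<Rightarrow> bool" where
  "max_tensor_state K u \<omega> \<longleftrightarrow>
     bilinear \<omega> \<and> (\<forall>a\<in>dual_cone K. \<forall>b\<in>dual_cone K. 0 \<le> \<omega> a b) \<and> \<omega> u u = 1"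

text \<open>\<omega>-hat: A* \<rightarrow> A, where \<omega>-hat(a) is the element of A = A** given by b \<mapsto> \<omega> a b.\<close>
definition omega_hat :: "('a::euclidean_space \<Rightarrow> 'a \<Rightarrow> real) \<Rightarrow> 'a \<Rightarrow> 'a" where
  "omega_hat \<omega> a = (\<Sum>b\<in>Basis. \<omega> a b *\<^sub>R b)"

definition isomorphism_state :: "'a::euclidean_space set \<Rightarrow> 'a \<Rightarrow> ('a \<Rightarrow> 'a \<Rightarrow> real) \<Rightarrow> bool" where
  "isomorphism_state K u \<omega> \<longleftrightarrow>
     max_tensor_state K u \<omega> \<and> order_iso (dual_cone K) K (omega_hat \<omega>)"

end

theory Submission
  imports Defs
begin

text \<open>Both conditions say that the order-isomorphisms \<open>A\<^sup>* \<rightarrow> A\<close> carry \<open>u\<^sub>A\<close> to every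
  interior point of \<open>A\<^sub>+\<close>. An isomorphism state \<open>\<omega>\<close> is the same thing as the order-isomorphism
  \<open>\<psi> = \<omega>-hat\<close>, via \<open>\<omega>(a, b) = b(\<psi> a)\<close>, and normalization of \<open>\<omega>\<close> is just \<open>u\<^sub>A(\<psi> u\<^sub>A) = 1\<close>,
  which rescaling by \<open>u\<^sub>A(x)\<close> removes. If one such \<open>\<phi>\<close> exists and \<open>A\<^sub>+\<close> is homogeneous,
  composing \<open>\<phi>\<close> with automorphisms reaches every interior point; conversely \<open>\<psi>\<^sub>y \<circ> \<psi>\<^sub>x\<^sup>-\<^sup>1\<close>
  is an automorphism of \<open>A\<^sub>+\<close> sending \<open>x\<close> to \<open>y\<close>.\<close>

lemma order_iso_image:
  assumes "order_iso K1 K2 T"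
  shows "T ` K1 = K2"
proof
  show "T ` K1 \<subseteq> K2"
    using assms unfolding order_iso_def by blast
  show "K2 \<subseteq> T ` K1"
  proof
    fix y assume "y \<in> K2"
    obtain x where "y = T x"
      using assms unfolding order_iso_def by (meson bij_pointE)
    with \<open>y \<in> K2\<close> assms show "y \<in> T ` K1"
      unfolding order_iso_def by blast
  qed
qed

lemma order_iso_interior_image:
  assumes "order_iso K1 K2 T"
  shows "T ` interior K1 = interior K2"
proof -
  have "linear T" "inj T"
    using assms unfolding order_iso_def by (auto simp: bij_is_inj)
  then show ?thesis
    using interior_injective_linear_image order_iso_image[OF assms] by metis
qed

lemma order_iso_compose:
  assumes "order_iso K1 K2 S" "order_iso K2 K3 T"
  shows "order_iso K1 K3 (T \<circ> S)"
  using assms unfolding order_iso_def by (simp add: linear_compose bij_comp)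

lemma order_iso_inv:
  assumes "order_iso K1 K2 T"
  shows "order_iso K2 K1 (inv T)"
  using assms unfolding order_iso_def
  by (metis bij_imp_bij_inv bij_is_inj bij_is_surj inj_linear_imp_inv_linear surj_f_inv_f)

lemma order_iso_scaleR:
  fixes K :: "'a::euclidean_space set"
  assumes "cone K" "c > 0"
  shows "order_iso K K ((*\<^sub>R) c)"
proof -
  have "bij ((*\<^sub>R) c :: 'a \<Rightarrow> 'a)"
    using \<open>c > 0\<close> by (intro bij_betw_byWitness[where f' = "(*\<^sub>R) (inverse c)"]) auto
  moreover have "c *\<^sub>R x \<in> K \<longleftrightarrow> x \<in> K" for x
  proof
    assume "c *\<^sub>R x \<in> K"
    then have "inverse c *\<^sub>R (c *\<^sub>R x) \<in> K"
      using mem_cone[OF \<open>cone K\<close> _, of "c *\<^sub>R x" "inverse c"] \<open>c > 0\<close> by simp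
    then show "x \<in> K"
      using \<open>c > 0\<close> by simp
  qed (use mem_cone[OF \<open>cone K\<close>] \<open>c > 0\<close> in simp)
  ultimately show ?thesis
    unfolding order_iso_def by (simp add: linear_scaleR)
qed

lemma omega_hat_inner:
  "omega_hat (\<lambda>a b. b \<bullet> \<psi> a) = \<psi>"
proof
  fix a
  have "(\<Sum>b\<in>Basis. (b \<bullet> \<psi> a) *\<^sub>R b) = (\<Sum>b\<in>Basis. (\<psi> a \<bullet> b) *\<^sub>R b)"
    by (simp add: inner_commute)
  then show "omega_hat (\<lambda>a b. b \<bullet> \<psi> a) a = \<psi> a"
    by (simp add: omega_hat_def euclidean_representation)
qed

lemma isomorphism_state_inner:
  assumes "order_iso (dual_cone K) K \<psi>" "u \<bullet> \<psi> u = 1"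
  shows "isomorphism_state K u (\<lambda>a b. b \<bullet> \<psi> a)"
proof -
  have "linear \<psi>" and mem: "\<And>a. a \<in> dual_cone K \<Longrightarrow> \<psi> a \<in> K"
    using assms(1) unfolding order_iso_def by auto
  then have "bilinear (\<lambda>a b. b \<bullet> \<psi> a)"
    by (simp add: bilinear_def linear_compose[of \<psi> "inner _", unfolded o_def]
        bounded_linear.linear[OF bounded_linear_inner_left]
        bounded_linear.linear[OF bounded_linear_inner_right])
  moreover have "\<forall>a\<in>dual_cone K. \<forall>b\<in>dual_cone K. 0 \<le> b \<bullet> \<psi> a"
    using mem unfolding dual_cone_def by blast
  ultimately show ?thesis
    using assms unfolding isomorphism_state_def max_tensor_state_def omega_hat_inner by simp
qed

lemma pointed_cone_zero_notin_interior:
  fixes K :: "'a::euclidean_space set"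
  assumes "K \<inter> uminus ` K = {0}"
  shows "0 \<notin> interior K"
proof
  assume "0 \<in> interior K"
  then obtain r where "r > 0" "ball 0 r \<subseteq> K"
    using mem_interior by blast
  obtain b :: 'a where "b \<in> Basis"
    using nonempty_Basis by blast
  define v where "v = (r / 2) *\<^sub>R b"
  have "v \<in> K" "- v \<in> K"
    using \<open>r > 0\<close> \<open>ball 0 r \<subseteq> K\<close> \<open>b \<in> Basis\<close> by (auto simp: v_def subset_iff)
  then have "v \<in> uminus ` K"
    using image_eqI[of v uminus "- v"] by simp
  then have "v = 0"
    using assms \<open>v \<in> K\<close> by blast
  then show False
    using \<open>r > 0\<close> \<open>b \<in> Basis\<close> nonzero_Basis by (simp add: v_def)
qed

lemma interior_dual_cone_inner_pos:
  assumes "u \<in> interior (dual_cone K)" "x \<in> K" "x \<noteq> 0"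
  shows "0 < u \<bullet> x"
proof -
  obtain e where "e > 0" "ball u e \<subseteq> dual_cone K"
    using assms(1) mem_interior by blast
  define d where "d = e / (2 * norm x)"
  have "d > 0"
    using \<open>e > 0\<close> \<open>x \<noteq> 0\<close> by (simp add: d_def)
  have "u - d *\<^sub>R x \<in> ball u e"
    using \<open>e > 0\<close> \<open>x \<noteq> 0\<close> by (simp add: d_def dist_norm)
  then have "u - d *\<^sub>R x \<in> dual_cone K"
    using \<open>ball u e \<subseteq> dual_cone K\<close> by blast
  then have "0 \<le> (u - d *\<^sub>R x) \<bullet> x"
    using \<open>x \<in> K\<close> unfolding dual_cone_def by blast
  moreover have "0 < d * (x \<bullet> x)"
    using \<open>d > 0\<close> \<open>x \<noteq> 0\<close> by simp
  ultimately show ?thesis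
    by (simp add: inner_diff_left)
qed

lemma generating_convex_interior_nonempty:
  fixes K :: "'a::euclidean_space set"
  assumes "convex K" "0 \<in> K" "{x - y | x y. x \<in> K \<and> y \<in> K} = UNIV"
  shows "interior K \<noteq> {}"
proof -
  have "z \<in> span K" for z
  proof -
    obtain x y where "z = x - y" "x \<in> K" "y \<in> K"
      using assms(3) by blast
    then show ?thesis
      by (simp add: span_base span_diff)
  qed
  then have "affine hull K = UNIV"
    using affine_hull_span_0[OF hull_inc[OF \<open>0 \<in> K\<close>]] by auto
  then show ?thesis
    using rel_interior_interior rel_interior_eq_empty[OF \<open>convex K\<close>] \<open>0 \<in> K\<close> by fastforce
qed

lemma abstract_state_space_interior_inner_pos:
  assumes "abstract_state_space K u" "x \<in> interior K"
  shows "0 < u \<bullet> x"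
proof (rule interior_dual_cone_inner_pos)
  show "u \<in> interior (dual_cone K)" "x \<noteq> 0"
    using assms pointed_cone_zero_notin_interior unfolding abstract_state_space_def by auto
  show "x \<in> K"
    using assms(2) interior_subset by blast
qed

definition order_iso_orbit :: "'a::euclidean_space set \<Rightarrow> 'a \<Rightarrow> 'a set" where
  "order_iso_orbit K u = {\<psi> u | \<psi>. order_iso (dual_cone K) K \<psi>}"

lemma weakly_self_dual_homogeneous_iff_orbit:
  assumes "u \<in> interior (dual_cone K)" "interior K \<noteq> {}"
  shows "weakly_self_dual K \<and> homogeneous_cone K \<longleftrightarrow> interior K \<subseteq> order_iso_orbit K u"
proof
  assume "weakly_self_dual K \<and> homogeneous_cone K"
  then obtain \<phi> where \<phi>: "order_iso (dual_cone K) K \<phi>" and hom: "homogeneous_cone K"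
    unfolding weakly_self_dual_def by blast
  have "\<phi> u \<in> interior K"
    using order_iso_interior_image[OF \<phi>] assms(1) by blast
  show "interior K \<subseteq> order_iso_orbit K u"
  proof
    fix \<alpha> assume "\<alpha> \<in> interior K"
    then obtain g where g: "order_iso K K g" "g (\<phi> u) = \<alpha>"
      using hom \<open>\<phi> u \<in> interior K\<close> unfolding homogeneous_cone_def by blast
    have "order_iso (dual_cone K) K (g \<circ> \<phi>)" "(g \<circ> \<phi>) u = \<alpha>"
      using order_iso_compose[OF \<phi> g(1)] g(2) by auto
    then show "\<alpha> \<in> order_iso_orbit K u"
      unfolding order_iso_orbit_def by blast
  qed
next
  assume orbit: "interior K \<subseteq> order_iso_orbit K u"
  then have "weakly_self_dual K"
    using assms(2) unfolding order_iso_orbit_def weakly_self_dual_def by blast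
  moreover have "homogeneous_cone K"
    unfolding homogeneous_cone_def
  proof (intro ballI)
    fix x y assume "x \<in> interior K" "y \<in> interior K"
    then obtain \<psi>x \<psi>y where \<psi>x: "order_iso (dual_cone K) K \<psi>x" "\<psi>x u = x"
      and \<psi>y: "order_iso (dual_cone K) K \<psi>y" "\<psi>y u = y"
      using orbit unfolding order_iso_orbit_def by blast
    have "inv \<psi>x x = u"
      using \<psi>x by (metis bij_is_inj inv_f_f order_iso_def)
    then show "\<exists>T. order_iso K K T \<and> T x = y"
      using order_iso_compose[OF order_iso_inv[OF \<psi>x(1)] \<psi>y(1)] \<psi>y(2) by auto
  qed
  ultimately show "weakly_self_dual K \<and> homogeneous_cone K" ..
qed

lemma interior_subset_orbit_iff_normalized:
  assumes "abstract_state_space K u"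
  shows "interior K \<subseteq> order_iso_orbit K u \<longleftrightarrow>
    (\<forall>\<alpha>. normalized_state K u \<alpha> \<and> \<alpha> \<in> interior K \<longrightarrow> \<alpha> \<in> order_iso_orbit K u)"
proof (intro iffI allI impI subsetI)
  fix x assume normalized:
    "\<forall>\<alpha>. normalized_state K u \<alpha> \<and> \<alpha> \<in> interior K \<longrightarrow> \<alpha> \<in> order_iso_orbit K u"
    and "x \<in> interior K"
  have "cone K"
    using assms unfolding abstract_state_space_def by blast
  define c where "c = u \<bullet> x"
  have "c > 0"
    using abstract_state_space_interior_inner_pos[OF assms \<open>x \<in> interior K\<close>] by (simp add: c_def)
  have "inverse c *\<^sub>R x \<in> interior K"
    using order_iso_interior_image[OF order_iso_scaleR[OF \<open>cone K\<close>, of "inverse c"]]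
      \<open>c > 0\<close> \<open>x \<in> interior K\<close> by auto
  moreover have "u \<bullet> (inverse c *\<^sub>R x) = 1"
    using \<open>c > 0\<close> by (simp add: c_def)
  ultimately have "inverse c *\<^sub>R x \<in> order_iso_orbit K u"
    using normalized interior_subset unfolding normalized_state_def by blast
  then obtain \<psi> where \<psi>: "order_iso (dual_cone K) K \<psi>" "\<psi> u = inverse c *\<^sub>R x"
    unfolding order_iso_orbit_def by auto
  have "order_iso (dual_cone K) K ((*\<^sub>R) c \<circ> \<psi>)"
    using order_iso_compose[OF \<psi>(1) order_iso_scaleR[OF \<open>cone K\<close> \<open>c > 0\<close>]] .
  moreover have "((*\<^sub>R) c \<circ> \<psi>) u = x"
    using \<psi>(2) \<open>c > 0\<close> by simp
  ultimately show "x \<in> order_iso_orbit K u"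
    unfolding order_iso_orbit_def by blast
qed auto

lemma orbit_iff_isomorphism_state_marginal:
  assumes "normalized_state K u \<alpha>"
  shows "\<alpha> \<in> order_iso_orbit K u \<longleftrightarrow> (\<exists>\<omega>. isomorphism_state K u \<omega> \<and> omega_hat \<omega> u = \<alpha>)"
proof
  assume "\<alpha> \<in> order_iso_orbit K u"
  then obtain \<psi> where "order_iso (dual_cone K) K \<psi>" "\<psi> u = \<alpha>"
    unfolding order_iso_orbit_def by blast
  with assms show "\<exists>\<omega>. isomorphism_state K u \<omega> \<and> omega_hat \<omega> u = \<alpha>"
    using isomorphism_state_inner omega_hat_inner unfolding normalized_state_def by metis
qed (auto simp: isomorphism_state_def order_iso_orbit_def)

theorem corollary4p2:
  fixes K :: "'a::euclidean_space set" and u :: 'a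
  assumes "abstract_state_space K u"
    and "irreducible_cone K"
  shows "(weakly_self_dual K \<and> homogeneous_cone K) \<longleftrightarrow>
         (\<forall>\<alpha>. normalized_state K u \<alpha> \<and> \<alpha> \<in> interior K \<longrightarrow>
              (\<exists>\<omega>. isomorphism_state K u \<omega> \<and> omega_hat \<omega> u = \<alpha>))"
proof -
  have "u \<in> interior (dual_cone K)" "interior K \<noteq> {}"
    using assms(1) generating_convex_interior_nonempty
    unfolding abstract_state_space_def by blast+
  then have "(weakly_self_dual K \<and> homogeneous_cone K) \<longleftrightarrow> interior K \<subseteq> order_iso_orbit K u"
    by (rule weakly_self_dual_homogeneous_iff_orbit)
  also have "\<dots> \<longleftrightarrow>
      (\<forall>\<alpha>. normalized_state K u \<alpha> \<and> \<alpha> \<in> interior K \<longrightarrow> \<alpha> \<in> order_iso_orbit K u)"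
    using assms(1) by (rule interior_subset_orbit_iff_normalized)
  finally show ?thesis
    by (simp add: orbit_iff_isomorphism_state_marginal)
qed

end
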